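(* Let $0<q<p\le 1$, let $n\in\mathbb{N}$, $k\in\{0,1,2,\dots\}$, and for $t\in[0,1]$ put $$b_{n,k}^{(p,q)}(qt)=\frac{1}{p^{k(n-1)+n(n-1)/2}}\begin{bmatrix}n+k+1\\k\end{bmatrix}_{p,q}(qt)^k(1-qt)_{p,q}^{n}.$$ Then for every $s=0,1,2,\dots$, $$\int_0^1 b_{n,k}^{(p,q)}(qt)\,t^s\,d_{p,q}t=\frac{[n+k+1]_{p,q}!\,[k+s]_{p,q}!}{[k]_{p,q}!\,[n+k+s+1]_{p,q}!}\cdot\frac{(pq)^k}{[n+1]_{p,q}}\,p^{n(s+1)}.$$
   Context: For $0<q<p\le1$: $[n]_{p,q}=\frac{p^n-q^n}{p-q}$; $[n]_{p,q}!=[1]_{p,q}[2]_{p,q}\cdots[n]_{p,q}$ for $n\ge1$ and $[0]_{p,q}!=1$; $\begin{bmatrix}n\\k\end{bmatrix}_{p,q}=\frac{[n]_{p,q}!}{[k]_{p,q}![n-k]_{p,q}!}$; $(x+y)_{p,q}^n=\prod_{j=0}^{n-1}(p^jx+q^jy)$, so $(1-qt)^n_{p,q}=\prod_{j=0}^{n-1}(p^j-q^{j+1}t)$. The $(p,q)$-integral is $\int_0^a f(t)\,d_{p,q}t=(p-q)a\sum_{j=0}^\infty \frac{q^j}{p^{j+1}}f\!\left(\frac{q^j}{p^{j+1}}a\right)$. *)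

theory Defs
  imports "HOL-Analysis.Analysis"
begin

definition pq_num :: "real \<Rightarrow> real \<Rightarrow> nat \<Rightarrow> real" where
  "pq_num p q n = (p ^ n - q ^ n) / (p - q)"

definition pq_fact :: "real \<Rightarrow> real \<Rightarrow> nat \<Rightarrow> real" where
  "pq_fact p q n = (\<Prod>i=1..n. pq_num p q i)"

definition pq_binom :: "real \<Rightarrow> real \<Rightarrow> nat \<Rightarrow> nat \<Rightarrow> real" where
  "pq_binom p q n k = pq_fact p q n / (pq_fact p q k * pq_fact p q (n - k))"

definition pq_power :: "real \<Rightarrow> real \<Rightarrow> real \<Rightarrow> real \<Rightarrow> nat \<Rightarrow> real" where
  "pq_power p q x y n = (\<Prod>j<n. p ^ j * x + q ^ j * y)"

definition pq_integral :: "real \<Rightarrow> real \<Rightarrow> real \<Rightarrow> (real \<Rightarrow> real) \<Rightarrow> real" where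
  "pq_integral p q a f =
     (p - q) * a * (\<Sum>j. q ^ j / p ^ (j + 1) * f (q ^ j / p ^ (j + 1) * a))"

definition pq_bern :: "real \<Rightarrow> real \<Rightarrow> nat \<Rightarrow> nat \<Rightarrow> real \<Rightarrow> real" where
  "pq_bern p q n k t =
     1 / p powr (real k * (real n - 1) + real n * (real n - 1) / 2)
     * pq_binom p q (n + k + 1) k * (q * t) ^ k * pq_power p q 1 (- (q * t)) n"

end

theory Submission
  imports Defs
begin

text \<open>
  Since \<open>(1-qt)^(n+1)_{p,q} = (1-qt)^n_{p,q} (p^n - q^(n+1) t)\<close>, the moments
  \<open>B n m = \<integral> t^m (1-qt)^n_{p,q} d_{p,q}t\<close> satisfy
  \<open>B (n+1) m = p^n B n m - q^(n+1) B n (m+1)\<close> with \<open>B 0 m = 1/[m+1]_{p,q}\<close> (a geometric series).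
  This recursion is solved by the \<open>(p,q)\<close>-beta value
  \<open>[m]! [n]! / [n+m+1]! \<cdot> p^(nm + n(n+1)/2)\<close>, thanks to
  \<open>[n+m+2] = p^(m+1) [n+1] + q^(n+1) [m+1]\<close>.
  The theorem is the case \<open>m = k + s\<close>, multiplied by the normalising constant of \<open>b_{n,k}\<close>.
\<close>

lemma pq_num_add:
  "p \<noteq> q \<Longrightarrow> pq_num p q (a + b) = p ^ b * pq_num p q a + q ^ a * pq_num p q b"
  by (simp add: pq_num_def power_add add_divide_distrib [symmetric] algebra_simps)

lemma pq_num_pos: "0 < q \<Longrightarrow> q < p \<Longrightarrow> 1 \<le> i \<Longrightarrow> 0 < pq_num p q i"
  unfolding pq_num_def using power_strict_mono[of q p i] by auto

lemma pq_fact_0 [simp]: "pq_fact p q 0 = 1"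
  by (simp add: pq_fact_def)

lemma pq_fact_Suc: "pq_fact p q (Suc n) = pq_fact p q n * pq_num p q (Suc n)"
  unfolding pq_fact_def by (simp add: prod.nat_ivl_Suc')

lemma pq_fact_pos: "0 < q \<Longrightarrow> q < p \<Longrightarrow> 0 < pq_fact p q n"
  unfolding pq_fact_def by (rule prod_pos) (auto intro: pq_num_pos)

fun triangle :: "nat \<Rightarrow> nat" where
  "triangle 0 = 0"
| "triangle (Suc n) = triangle n + Suc n"

lemma of_nat_triangle: "real (triangle n) = real n * (real n + 1) / 2"
  by (induction n) (auto simp: field_simps)

definition pq_beta :: "real \<Rightarrow> real \<Rightarrow> nat \<Rightarrow> nat \<Rightarrow> real" where
  "pq_beta p q n m =
     pq_fact p q m * pq_fact p q n / pq_fact p q (n + m + 1) * p ^ (n * m + triangle n)"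

lemma pq_beta_0:
  assumes "0 < q" "q < p"
  shows "pq_beta p q 0 m = 1 / pq_num p q (m + 1)"
  using pq_fact_pos[OF assms, of m] by (simp add: pq_beta_def pq_fact_Suc)

lemma pq_beta_Suc:
  assumes "0 < q" "q < p"
  shows "pq_beta p q (Suc n) m = p ^ n * pq_beta p q n m - q ^ (n + 1) * pq_beta p q n (m + 1)"
proof -
  define A where "A = pq_fact p q m * pq_fact p q n * p ^ (n * m + triangle n)"
  define F where "F = pq_fact p q (n + m + 1)"
  define N where "N = pq_num p q (n + m + 2)"
  have "0 < F" "0 < N"
    unfolding F_def N_def using pq_fact_pos pq_num_pos assms by auto
  have N_split: "N - q ^ (n + 1) * pq_num p q (m + 1) = p ^ (m + 1) * pq_num p q (n + 1)"
    unfolding N_def using pq_num_add[of p q "n + 1" "m + 1"] assms by (simp add: algebra_simps)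
  have "pq_fact p q (Suc n + m + 1) = F * N" "pq_fact p q (n + (m + 1) + 1) = F * N"
    unfolding F_def N_def using pq_fact_Suc[of p q "n + m + 1"] by (simp_all add: algebra_simps)
  then have "pq_beta p q (Suc n) m = A * pq_num p q (n + 1) / (F * N) * p ^ (m + n + 1)"
    and "pq_beta p q n m = A / F"
    and "pq_beta p q n (m + 1) = A * pq_num p q (m + 1) / (F * N) * p ^ n"
    unfolding pq_beta_def A_def F_def by (simp_all add: pq_fact_Suc power_add algebra_simps)
  moreover have "p ^ n * (A / F) - q ^ (n + 1) * (A * pq_num p q (m + 1) / (F * N) * p ^ n)
      = A * p ^ n / (F * N) * (N - q ^ (n + 1) * pq_num p q (m + 1))"
    using \<open>0 < F\<close> \<open>0 < N\<close> by (simp add: field_simps)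
  ultimately show ?thesis
    unfolding N_split by (simp add: power_add mult_ac)
qed

lemma pq_moment_sums:
  assumes "0 < q" "q < p"
  shows "(\<lambda>j. q ^ j / p ^ (j + 1) *
            ((q ^ j / p ^ (j + 1)) ^ m * pq_power p q 1 (- (q * (q ^ j / p ^ (j + 1)))) n))
         sums (pq_beta p q n m / (p - q))"
proof (induction n arbitrary: m)
  case 0
  have "0 < p" using assms by simp
  have ratio: "norm ((q / p) ^ (m + 1)) < 1"
    using assms power_Suc_less_one[of "q / p" m] by simp
  have "(\<lambda>j. (1 / p) ^ (m + 1) * ((q / p) ^ (m + 1)) ^ j)
          sums ((1 / p) ^ (m + 1) * (1 / (1 - (q / p) ^ (m + 1))))"
    by (rule sums_mult[OF geometric_sums[OF ratio]])
  moreover have "p ^ (m + 1) - q ^ (m + 1) > 0"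
    using power_strict_mono[of q p "m + 1"] assms by simp
  then have "(1 / p) ^ (m + 1) * (1 / (1 - (q / p) ^ (m + 1))) = 1 / (p ^ (m + 1) - q ^ (m + 1))"
    using \<open>0 < p\<close> by (simp add: field_simps power_divide)
  also have "\<dots> = pq_beta p q 0 m / (p - q)"
    using assms by (simp add: pq_beta_0 pq_num_def)
  ultimately show ?case
    by (simp add: pq_power_def power_divide power_mult [symmetric] power_mult_distrib
        field_simps power_add mult.commute)
next
  case (Suc n)
  have "(\<lambda>j. p ^ n * (q ^ j / p ^ (j + 1) *
            ((q ^ j / p ^ (j + 1)) ^ m * pq_power p q 1 (- (q * (q ^ j / p ^ (j + 1)))) n))
          - q ^ (n + 1) * (q ^ j / p ^ (j + 1) *
            ((q ^ j / p ^ (j + 1)) ^ (m + 1) * pq_power p q 1 (- (q * (q ^ j / p ^ (j + 1)))) n)))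
        sums (p ^ n * (pq_beta p q n m / (p - q)) - q ^ (n + 1) * (pq_beta p q n (m + 1) / (p - q)))"
    by (intro sums_diff sums_mult Suc.IH)
  then show ?case
    by (simp add: pq_beta_Suc[OF assms] pq_power_def diff_divide_distrib algebra_simps)
qed

lemma pq_bern_normaliser:
  assumes "0 < p"
  shows "p powr (real k * (real n - 1) + real n * (real n - 1) / 2) * (p ^ k * p ^ (n * (s + 1)))
       = p ^ (n * (k + s) + triangle n)"
proof -
  have "real (n * (k + s) + triangle n)
      = (real k * (real n - 1) + real n * (real n - 1) / 2) + (real k + real (n * (s + 1)))"
    by (simp add: of_nat_triangle field_simps)
  then show ?thesis
    using assms by (simp add: powr_realpow [symmetric] powr_add)
qed

theorem lemma2:
  fixes p q :: real and n k s :: nat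
  assumes "0 < q" "q < p" "p \<le> 1"
  shows "pq_integral p q 1 (\<lambda>t. pq_bern p q n k t * t ^ s) =
    pq_fact p q (n + k + 1) * pq_fact p q (k + s) / (pq_fact p q k * pq_fact p q (n + k + s + 1))
    * ((p * q) ^ k / pq_num p q (n + 1)) * p ^ (n * (s + 1))"
proof -
  define E where "E = real k * (real n - 1) + real n * (real n - 1) / 2"
  define C where "C = pq_binom p q (n + k + 1) k * q ^ k / p powr E"
  have "\<And>t. pq_bern p q n k t * t ^ s = C * (t ^ (k + s) * pq_power p q 1 (- (q * t)) n)"
    unfolding C_def E_def pq_bern_def by (simp add: power_add power_mult_distrib mult_ac)
  then have "(\<lambda>j. q ^ j / p ^ (j + 1) *
        (pq_bern p q n k (q ^ j / p ^ (j + 1) * 1) * (q ^ j / p ^ (j + 1) * 1) ^ s))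
      sums (C * (pq_beta p q n (k + s) / (p - q)))"
    using sums_mult[OF pq_moment_sums[OF assms(1,2)], of C] by (simp add: mult_ac)
  from sums_unique[OF this, symmetric]
  have "pq_integral p q 1 (\<lambda>t. pq_bern p q n k t * t ^ s) = C * pq_beta p q n (k + s)"
    unfolding pq_integral_def using assms by simp
  moreover have "pq_binom p q (n + k + 1) k
      = pq_fact p q (n + k + 1) / (pq_fact p q k * (pq_fact p q n * pq_num p q (n + 1)))"
    unfolding pq_binom_def by (simp add: pq_fact_Suc)
  moreover have "0 < p" "0 < p powr E" using assms by auto
  moreover have "0 < pq_fact p q k" "0 < pq_fact p q n" "0 < pq_fact p q (n + k + s + 1)"
    "0 < pq_num p q (n + 1)"
    using pq_fact_pos pq_num_pos assms(1,2) by auto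
  ultimately show ?thesis
    unfolding C_def pq_beta_def pq_bern_normaliser[OF \<open>0 < p\<close>, of k n s, folded E_def, symmetric]
    by (simp add: field_simps power_mult_distrib add_ac)
qed

end
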